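(* Let $U$ be a finite ground set partitioned as $\mathcal{P}=\{U_1,\dots,U_N\}$, let $\kappa\in\mathbb{N}$, $\vec l,\vec u\in\mathbb{N}^N$, let $\beta\in\mathbb{N}_+$, and let $\mathcal{M}_\beta$ be the $\beta$-extension of $\mathcal{M}_{fair}(\mathcal{P},\kappa,\vec l,\vec u)$. Then for any $S\in\mathcal{M}_\beta$ with $|S|=\beta\kappa$, any $T\in\mathcal{M}_{fair}(\mathcal{P},\kappa,\vec l,\vec u)$ with $|T|=\kappa$, and any ordering $S=(s_1,\dots,s_{\beta\kappa})$ of $S$, there exists a sequence $E=(e_1,\dots,e_{\beta\kappa})$ in which each element of $T$ appears exactly $\beta$ times, such that $S_i\cup\{e_{i+1}\}\in\mathcal{M}_\beta$ for all $i\in\{0,1,\dots,\beta\kappa-1\}$, where $S_i=\{s_1,\dots,s_i\}$ and $S_0=\emptyset$.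
   Context: Fairness matroid: $\mathcal{M}_{fair}(\mathcal{P},\kappa,\vec l,\vec u)=\{S\subseteq U: |S\cap U_c|\le u_c\ \forall c\in[N],\ \sum_{c\in[N]}\max\{|S\cap U_c|,l_c\}\le\kappa\}$. Its $\beta$-extension is $\mathcal{M}_\beta=\mathcal{M}_{fair}(\mathcal{P},\beta\kappa,\beta\vec l,\beta\vec u)=\{S\subseteq U: |S\cap U_c|\le\beta u_c\ \forall c,\ \sum_c\max\{|S\cap U_c|,\beta l_c\}\le\beta\kappa\}$. *)

theory Defs
  imports Main "HOL-Library.Multiset"
begin

definition is_partition :: "'a set \<Rightarrow> nat \<Rightarrow> (nat \<Rightarrow> 'a set) \<Rightarrow> bool" where
  "is_partition U N P \<longleftrightarrow>
     (\<forall>c<N. P c \<noteq> {}) \<and>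
     (\<forall>c<N. \<forall>d<N. c \<noteq> d \<longrightarrow> P c \<inter> P d = {}) \<and>
     (\<Union>c<N. P c) = U"

definition fair_matroid ::
  "'a set \<Rightarrow> nat \<Rightarrow> (nat \<Rightarrow> 'a set) \<Rightarrow> nat \<Rightarrow> (nat \<Rightarrow> nat) \<Rightarrow> (nat \<Rightarrow> nat) \<Rightarrow> 'a set set" where
  "fair_matroid U N P \<kappa> l u =
     {S. S \<subseteq> U \<and> (\<forall>c<N. card (S \<inter> P c) \<le> u c) \<and>
         (\<Sum>c<N. max (card (S \<inter> P c)) (l c)) \<le> \<kappa>}"

definition beta_extension ::
  "'a set \<Rightarrow> nat \<Rightarrow> (nat \<Rightarrow> 'a set) \<Rightarrow> nat \<Rightarrow> (nat \<Rightarrow> nat) \<Rightarrow> (nat \<Rightarrow> nat) \<Rightarrow> nat \<Rightarrow> 'a set set" where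
  "beta_extension U N P \<kappa> l u \<beta> =
     fair_matroid U N P (\<beta> * \<kappa>) (\<lambda>c. \<beta> * l c) (\<lambda>c. \<beta> * u c)"

end

theory Submission
  imports Defs
begin

(*
  Let S_k = {s_1, ..., s_k}. Call x in T blocked at S_k if S_k + x is dependent in M_beta.
  A blocked x lies in a colour class c that is full in S_k (|S_k inter U_c| >= beta u_c), or that
  already meets its lower quota while the global budget beta kappa is exhausted. Comparing with T,
  which takes between l_c and u_c elements of every class and kappa in total, these classes carry
  at most k / beta elements of T, so at most k of the beta kappa copies of elements of T are
  blocked at S_k. Blocking persists along the chain of prefixes, so listing the copies by the
  time at which they become blocked (earliest deadline first) puts every copy at a position
  where it is still free.
*)

lemma sorted_deadlines_met:
  fixes D :: "'a \<Rightarrow> nat"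
  assumes sorted: "sorted (map D e)"
    and bound: "\<And>k. k < length e \<Longrightarrow> length (filter (\<lambda>x. D x \<le> k) e) \<le> k"
    and i: "i < length e"
  shows "i < D (e ! i)"
proof (rule ccontr)
  assume "\<not> i < D (e ! i)"
  then have late: "D (e ! i) \<le> i" by simp
  have "{..i} \<subseteq> {j. j < length e \<and> D (e ! j) \<le> D (e ! i)}"
  proof
    fix j assume "j \<in> {..i}"
    then have "j \<le> i" by simp
    with sorted_nth_mono[OF sorted this] i show "j \<in> {j. j < length e \<and> D (e ! j) \<le> D (e ! i)}"
      by simp
  qed
  then have "Suc i \<le> card {j. j < length e \<and> D (e ! j) \<le> D (e ! i)}"
    using card_mono[of "{j. j < length e \<and> D (e ! j) \<le> D (e ! i)}" "{..i}"] by simp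
  also have "\<dots> = length (filter (\<lambda>x. D x \<le> D (e ! i)) e)"
    by (simp add: length_filter_conv_card)
  also have "\<dots> \<le> D (e ! i)"
    using bound late i by simp
  finally show False using late by simp
qed

lemma exists_list_meeting_deadlines:
  fixes D :: "'a \<Rightarrow> nat" and M :: "'a multiset"
  assumes "\<And>k. k < size M \<Longrightarrow> size (filter_mset (\<lambda>x. D x \<le> k) M) \<le> k"
  shows "\<exists>e. mset e = M \<and> (\<forall>i < size M. i < D (e ! i))"
proof -
  obtain xs where xs: "mset xs = M" using ex_mset by blast
  define e where "e = sort_key D xs"
  have e: "mset e = M" unfolding e_def using xs by simp
  then have len: "length e = size M" by (metis size_mset)
  have "length (filter (\<lambda>x. D x \<le> k) e) \<le> k" if "k < length e" for k
    using assms[of k] that e len by (metis mset_filter size_mset)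
  then have "i < D (e ! i)" if "i < size M" for i
    using sorted_deadlines_met[of D e] that len unfolding e_def by simp
  with e show ?thesis by blast
qed

lemma less_Least_antimono_iff:
  fixes p :: "nat \<Rightarrow> bool"
  assumes antimono: "\<And>i j. p j \<Longrightarrow> i \<le> j \<Longrightarrow> p i" and "k < n"
  shows "k < (LEAST j. j = n \<or> \<not> p j) \<longleftrightarrow> p k"
proof
  assume "k < (LEAST j. j = n \<or> \<not> p j)"
  from not_less_Least[OF this] show "p k" by simp
next
  assume "p k"
  define L where "L = (LEAST j. j = n \<or> \<not> p j)"
  have L: "L = n \<or> \<not> p L"
    unfolding L_def by (rule LeastI[of _ n]) simp
  show "k < L"
  proof (rule ccontr)
    assume "\<not> k < L"
    then have "p L" by (intro antimono[OF \<open>p k\<close>]) simp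
    with L \<open>\<not> k < L\<close> \<open>k < n\<close> show False by simp
  qed
qed

lemma exists_list_along_chain:
  fixes A :: "nat \<Rightarrow> 'a set" and \<M> :: "'a set set" and M :: "'a multiset"
  assumes chain: "mono A"
    and down: "\<And>X Y. X \<in> \<M> \<Longrightarrow> Y \<subseteq> X \<Longrightarrow> Y \<in> \<M>"
    and bound: "\<And>k. k < size M \<Longrightarrow> size (filter_mset (\<lambda>x. insert x (A k) \<notin> \<M>) M) \<le> k"
  shows "\<exists>e. mset e = M \<and> (\<forall>i < size M. insert (e ! i) (A i) \<in> \<M>)"
proof -
  define D where "D x = (LEAST j. j = size M \<or> insert x (A j) \<notin> \<M>)" for x
  have antimono: "insert x (A j) \<in> \<M> \<Longrightarrow> i \<le> j \<Longrightarrow> insert x (A i) \<in> \<M>" for x i j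
    using down chain by (meson insert_mono monoD)
  have deadline: "k < D x \<longleftrightarrow> insert x (A k) \<in> \<M>" if "k < size M" for x k
    unfolding D_def using less_Least_antimono_iff[of "\<lambda>j. insert x (A j) \<in> \<M>", OF antimono that] .
  have "size (filter_mset (\<lambda>x. D x \<le> k) M) \<le> k" if "k < size M" for k
  proof -
    have "D x \<le> k \<longleftrightarrow> insert x (A k) \<notin> \<M>" for x
      using deadline[OF that, of x] by auto
    then show ?thesis using bound[OF that] by simp
  qed
  then obtain e where "mset e = M" "\<forall>i < size M. i < D (e ! i)"
    using exists_list_meeting_deadlines by blast
  then show ?thesis using deadline by blast
qed

lemma fair_matroid_subset_closed:
  assumes "finite U" "X \<in> fair_matroid U N P \<kappa> l u" "Y \<subseteq> X"
  shows "Y \<in> fair_matroid U N P \<kappa> l u"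
proof -
  have "finite (X \<inter> P c)" for c
    using assms(1,2) unfolding fair_matroid_def by (auto intro: finite_subset)
  then have le: "card (Y \<inter> P c) \<le> card (X \<inter> P c)" for c
    using assms(3) by (meson card_mono Int_mono order_refl)
  then have "(\<Sum>c<N. max (card (Y \<inter> P c)) (l c)) \<le> (\<Sum>c<N. max (card (X \<inter> P c)) (l c))"
    by (intro sum_mono max.mono) auto
  with assms(2,3) show ?thesis
    unfolding fair_matroid_def by (auto intro: order_trans[OF le])
qed

lemma card_eq_sum_card_Int_partition:
  assumes "is_partition U N P" "finite U" "A \<subseteq> U"
  shows "card A = (\<Sum>c<N. card (A \<inter> P c))"
proof -
  have "A = (\<Union>c<N. A \<inter> P c)"
    using assms unfolding is_partition_def by blast
  also have "card \<dots> = (\<Sum>c<N. card (A \<inter> P c))"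
  proof (intro card_UN_disjoint ballI impI)
    show "finite (A \<inter> P c)" for c
      using assms(2,3) by (meson finite_Int finite_subset)
    show "(A \<inter> P c) \<inter> (A \<inter> P d) = {}" if "c \<in> {..<N}" "d \<in> {..<N}" "c \<noteq> d" for c d
      using assms(1) that unfolding is_partition_def by blast
  qed simp
  finally show ?thesis .
qed

lemma fair_matroid_lower_le_card:
  assumes "is_partition U N P" "finite U"
    and T: "T \<in> fair_matroid U N P \<kappa> l u" "card T = \<kappa>" and "c < N"
  shows "l c \<le> card (T \<inter> P c)"
proof (rule ccontr)
  assume "\<not> l c \<le> card (T \<inter> P c)"
  then have "(\<Sum>d<N. card (T \<inter> P d)) < (\<Sum>d<N. max (card (T \<inter> P d)) (l d))"
    using \<open>c < N\<close> by (intro sum_strict_mono_ex1) (auto intro!: bexI[where x = c])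
  moreover have "(\<Sum>d<N. card (T \<inter> P d)) = \<kappa>"
    using card_eq_sum_card_Int_partition[OF assms(1,2)] T unfolding fair_matroid_def by simp
  ultimately show False
    using T unfolding fair_matroid_def by simp
qed

lemma insert_in_fair_matroid:
  assumes part: "is_partition U N P" and "finite U"
    and A: "A \<in> fair_matroid U N P \<kappa> l u" and x: "x \<in> P c" "c < N"
    and upper: "card (A \<inter> P c) < u c"
    and slack: "card (A \<inter> P c) < l c \<or> (\<Sum>d<N. max (card (A \<inter> P d)) (l d)) < \<kappa>"
  shows "insert x A \<in> fair_matroid U N P \<kappa> l u"
proof (cases "x \<in> A")
  case False
  have "finite A" using A \<open>finite U\<close> unfolding fair_matroid_def by (auto intro: finite_subset)
  have other: "x \<notin> P d" if "d < N" "d \<noteq> c" for d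
    using part x that unfolding is_partition_def by blast
  have card_insert: "card (insert x A \<inter> P d) = card (A \<inter> P d) + (if d = c then 1 else 0)"
    if "d < N" for d
    using x other[OF that] \<open>finite A\<close> False by (auto simp: Int_insert_left)
  have "(\<Sum>d<N. max (card (insert x A \<inter> P d)) (l d)) \<le> \<kappa>"
  proof (cases "card (A \<inter> P c) < l c")
    case True
    then have "(\<Sum>d<N. max (card (insert x A \<inter> P d)) (l d))
               = (\<Sum>d<N. max (card (A \<inter> P d)) (l d))"
      by (intro sum.cong) (auto simp: card_insert)
    then show ?thesis using A unfolding fair_matroid_def by simp
  next
    case False
    have "(\<Sum>d<N. max (card (insert x A \<inter> P d)) (l d))
          \<le> (\<Sum>d<N. max (card (A \<inter> P d)) (l d) + (if d = c then 1 else 0))"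
      by (intro sum_mono) (auto simp: card_insert)
    also have "\<dots> = (\<Sum>d<N. max (card (A \<inter> P d)) (l d)) + 1"
      using x by (simp add: sum.distrib)
    finally show ?thesis using slack False by simp
  qed
  moreover have "x \<in> U" using part x unfolding is_partition_def by blast
  ultimately show ?thesis
    using A upper card_insert unfolding fair_matroid_def by auto
qed (use A in \<open>simp add: insert_absorb\<close>)

lemma sum_le_sum_on_dominating:
  fixes a L t :: "'i \<Rightarrow> nat"
  assumes "finite I" "\<And>i. i \<in> I \<Longrightarrow> L i \<le> t i"
    and "(\<Sum>i\<in>I. t i) \<le> (\<Sum>i\<in>I. max (a i) (L i))"
  shows "(\<Sum>i\<in>{i\<in>I. L i \<le> a i}. t i) \<le> (\<Sum>i\<in>{i\<in>I. L i \<le> a i}. a i)"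
proof -
  let ?C = "{i\<in>I. L i \<le> a i}" and ?R = "{i\<in>I. \<not> L i \<le> a i}"
  have split: "sum f I = sum f ?C + sum f ?R" for f :: "'i \<Rightarrow> nat"
    using sum.Int_Diff[OF \<open>finite I\<close>, of f "{i. L i \<le> a i}"] by (simp add: Int_def set_diff_eq)
  have "sum t ?C + sum t ?R \<le> (\<Sum>i\<in>I. max (a i) (L i))"
    using assms(3) split[of t] by simp
  also have "\<dots> = sum a ?C + sum L ?R"
    unfolding split[of "\<lambda>i. max (a i) (L i)"] by (intro arg_cong2[where f = "(+)"] sum.cong) auto
  also have "\<dots> \<le> sum a ?C + sum t ?R"
    using assms(2) by (intro add_left_mono sum_mono) auto
  finally show ?thesis by simp
qed

lemma beta_extension_card_blocked_le:
  assumes fin: "finite U" and part: "is_partition U N P"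
    and A: "A \<in> beta_extension U N P \<kappa> l u \<beta>"
    and T: "T \<in> fair_matroid U N P \<kappa> l u" "card T = \<kappa>"
  shows "\<beta> * card {x\<in>T. insert x A \<notin> beta_extension U N P \<kappa> l u \<beta>} \<le> card A"
proof -
  define a where "a c = card (A \<inter> P c)" for c
  define t where "t c = card (T \<inter> P c)" for c
  define tight where "tight \<longleftrightarrow> \<beta> * \<kappa> \<le> (\<Sum>c<N. max (a c) (\<beta> * l c))"
  define C where "C = {c. c < N \<and> (\<beta> * u c \<le> a c \<or> tight \<and> \<beta> * l c \<le> a c)}"
  have AU: "A \<subseteq> U" using A unfolding beta_extension_def fair_matroid_def by simp
  have TU: "T \<subseteq> U" and t_le_u: "\<And>c. c < N \<Longrightarrow> t c \<le> u c"
    using T(1) unfolding fair_matroid_def t_def by auto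
  have l_le_t: "\<And>c. c < N \<Longrightarrow> l c \<le> t c"
    using fair_matroid_lower_le_card[OF part fin T] unfolding t_def .
  have blocked: "{x\<in>T. insert x A \<notin> beta_extension U N P \<kappa> l u \<beta>} \<subseteq> (\<Union>c\<in>C. T \<inter> P c)"
  proof
    fix x assume x: "x \<in> {x\<in>T. insert x A \<notin> beta_extension U N P \<kappa> l u \<beta>}"
    then obtain c where c: "x \<in> P c" "c < N"
      using part TU unfolding is_partition_def by blast
    have "c \<in> C"
    proof (rule ccontr)
      assume "c \<notin> C"
      then have "card (A \<inter> P c) < \<beta> * u c"
        and "card (A \<inter> P c) < \<beta> * l c \<or> (\<Sum>d<N. max (card (A \<inter> P d)) (\<beta> * l d)) < \<beta> * \<kappa>"
        using c(2) unfolding C_def tight_def a_def by auto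
      then have "insert x A \<in> fair_matroid U N P (\<beta> * \<kappa>) (\<lambda>c. \<beta> * l c) (\<lambda>c. \<beta> * u c)"
        by (intro insert_in_fair_matroid[OF part fin A[unfolded beta_extension_def] c]) simp_all
      then show False using x unfolding beta_extension_def by simp
    qed
    then show "x \<in> (\<Union>c\<in>C. T \<inter> P c)" using c x by blast
  qed
  have saturated: "(\<Sum>c\<in>C. \<beta> * t c) \<le> (\<Sum>c\<in>C. a c)"
  proof (cases tight)
    case True
    have l_le_u: "\<beta> * l c \<le> \<beta> * u c" if "c < N" for c
      using l_le_t[OF that] t_le_u[OF that] by simp
    have "(\<beta> * u c \<le> a c \<or> tight \<and> \<beta> * l c \<le> a c) \<longleftrightarrow> \<beta> * l c \<le> a c" if "c < N" for c
      using True l_le_u[OF that] by linarith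
    then have "C = {c\<in>{..<N}. \<beta> * l c \<le> a c}"
      unfolding C_def by auto
    moreover have "(\<Sum>c<N. \<beta> * t c) \<le> (\<Sum>c<N. max (a c) (\<beta> * l c))"
      using True card_eq_sum_card_Int_partition[OF part fin TU] T(2)
      unfolding tight_def t_def by (simp add: sum_distrib_left[symmetric])
    ultimately show ?thesis
      using sum_le_sum_on_dominating[of "{..<N}" "\<lambda>c. \<beta> * l c" "\<lambda>c. \<beta> * t c" a] l_le_t
      by simp
  next
    case False
    have "\<beta> * t c \<le> a c" if "c \<in> C" for c
    proof -
      have "c < N" "\<beta> * u c \<le> a c" using that False unfolding C_def by auto
      then show ?thesis using t_le_u[of c] mult_le_mono2[of "t c" "u c" \<beta>] by linarith
    qed
    then show ?thesis by (rule sum_mono)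
  qed
  have "finite T" using fin TU by (rule finite_subset[rotated])
  then have "\<beta> * card {x\<in>T. insert x A \<notin> beta_extension U N P \<kappa> l u \<beta>}
             \<le> \<beta> * card (\<Union>c\<in>C. T \<inter> P c)"
    using blocked unfolding C_def by (intro mult_le_mono2 card_mono) auto
  also have "\<dots> \<le> \<beta> * (\<Sum>c\<in>C. t c)"
    unfolding t_def C_def by (intro mult_le_mono2 card_UN_le) simp
  also have "\<dots> \<le> (\<Sum>c\<in>C. a c)"
    using saturated by (simp add: sum_distrib_left)
  also have "\<dots> \<le> (\<Sum>c<N. a c)"
    unfolding C_def by (intro sum_mono2) auto
  also have "\<dots> = card A"
    using card_eq_sum_card_Int_partition[OF part fin AU] unfolding a_def by simp
  finally show ?thesis .
qed

lemma filter_repeat_mset: "filter_mset p (repeat_mset n M) = repeat_mset n (filter_mset p M)"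
  by (rule multiset_eqI) simp

theorem lemma2:
  fixes U :: "'a set" and N :: nat and P :: "nat \<Rightarrow> 'a set"
    and \<kappa> \<beta> :: nat and l u :: "nat \<Rightarrow> nat"
    and S T :: "'a set" and s :: "'a list"
  assumes "finite U"
    and "is_partition U N P"
    and "\<beta> \<ge> 1"
    and "S \<in> beta_extension U N P \<kappa> l u \<beta>" and "card S = \<beta> * \<kappa>"
    and "T \<in> fair_matroid U N P \<kappa> l u" and "card T = \<kappa>"
    and "distinct s" and "set s = S"
  shows "\<exists>e :: 'a list. length e = \<beta> * \<kappa> \<and>
           (\<forall>x. count (mset e) x = (if x \<in> T then \<beta> else 0)) \<and>
           (\<forall>i < \<beta> * \<kappa>. set (take i s) \<union> {e ! i} \<in> beta_extension U N P \<kappa> l u \<beta>)"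
proof -
  let ?M\<^sub>\<beta> = "beta_extension U N P \<kappa> l u \<beta>"
  define M where "M = repeat_mset \<beta> (mset_set T)"
  have "finite T" using assms(1,6) unfolding fair_matroid_def by (auto intro: finite_subset)
  have size_M: "size M = \<beta> * \<kappa>" using \<open>card T = \<kappa>\<close> by (simp add: M_def)
  have down: "X \<in> ?M\<^sub>\<beta> \<Longrightarrow> Y \<subseteq> X \<Longrightarrow> Y \<in> ?M\<^sub>\<beta>" for X Y
    unfolding beta_extension_def by (rule fair_matroid_subset_closed[OF assms(1)])
  have "size (filter_mset (\<lambda>x. insert x (set (take k s)) \<notin> ?M\<^sub>\<beta>) M) \<le> k" if "k < size M" for k
  proof -
    have "set (take k s) \<in> ?M\<^sub>\<beta>" using down assms(4,9) set_take_subset by metis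
    then have "size (filter_mset (\<lambda>x. insert x (set (take k s)) \<notin> ?M\<^sub>\<beta>) M) \<le> card (set (take k s))"
      using beta_extension_card_blocked_le[OF assms(1,2) _ assms(6,7)] \<open>finite T\<close>
      by (simp add: M_def filter_repeat_mset)
    also have "\<dots> = k"
      using distinct_card[OF distinct_take[OF assms(8)]] distinct_card[OF assms(8)] assms(5,9) that size_M
      by simp
    finally show ?thesis .
  qed
  moreover have "mono (\<lambda>k. set (take k s))" by (rule monoI) (rule set_take_subset_set_take)
  ultimately obtain e where "mset e = M" "\<forall>i < size M. insert (e ! i) (set (take i s)) \<in> ?M\<^sub>\<beta>"
    using exists_list_along_chain[of "\<lambda>k. set (take k s)" ?M\<^sub>\<beta> M] down by blast
  then show ?thesis
    using size_M \<open>finite T\<close> by (intro exI[of _ e]) (auto simp: M_def dest: arg_cong[where f = size])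
qed

end
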